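(* Let $k\ge 1$ and consider $k$ linear constraints $\mathcal{C}_i[y]=\kappa_i$, $i=1,\dots,k$, on $y:\mathbb{R}\to\mathbb{R}$, with $\kappa_i\in\mathbb{R}$. Let $s_1,\dots,s_k$ be support functions with invertible support matrix $\mathbb{S}_{ij}=\mathcal{C}_i[s_j]$, $\alpha=\mathbb{S}^{-1}$, switching functions $\phi_j(x)=\sum_m s_m(x)\alpha_{mj}$, projection functionals $\rho_j(x,g(x))=\kappa_j-\mathcal{C}_j[g]$, and constrained expression $y(x,g(x))=g(x)+\sum_{j}\phi_j(x)\rho_j(x,g(x))$. Then for any function $f:\mathbb{R}\to\mathbb{R}$ satisfying the constraints (i.e., $\mathcal{C}_i[f]=\kappa_i$ for all $i$) there exists at least one free function $g$ such that $y(x,g(x))=f(x)$. Equivalently, the constrained expression, viewed as a functional from the set of all free functions to the set of all functions satisfying the constraints, is surjective.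
   Context: Each $\mathcal{C}_i$ is a linear operator returning the operand function evaluated in the same way as the dependent variable appears in the $i$-th constraint (combinations of values, derivatives and integrals of the function). A free function is any $g:\mathbb{R}\to\mathbb{R}$ for which all $\mathcal{C}_i[g]$ are defined. *)

theory Defs
  imports "HOL-Analysis.Analysis"
begin

text \<open>Constraints are indexed by a finite type 'k (so k = CARD('k) \<ge> 1).
  C i is the linear operator of the i-th constraint, defined on the set D of
  free functions (functions for which every C i is defined).\<close>

definition linear_constraints ::
  "('k \<Rightarrow> (real \<Rightarrow> real) \<Rightarrow> real) \<Rightarrow> (real \<Rightarrow> real) set \<Rightarrow> bool" where
  "linear_constraints C D \<longleftrightarrow>
     (\<forall>g\<in>D. \<forall>h\<in>D. \<forall>a b::real. (\<lambda>x. a * g x + b * h x) \<in> D \<and>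
        (\<forall>i. C i (\<lambda>x. a * g x + b * h x) = a * C i g + b * C i h))"

definition support_matrix ::
  "('k::finite \<Rightarrow> (real \<Rightarrow> real) \<Rightarrow> real) \<Rightarrow> ('k \<Rightarrow> real \<Rightarrow> real) \<Rightarrow> real^'k^'k" where
  "support_matrix C s = (\<chi> i j. C i (s j))"

definition switching_fun ::
  "('k::finite \<Rightarrow> (real \<Rightarrow> real) \<Rightarrow> real) \<Rightarrow> ('k \<Rightarrow> real \<Rightarrow> real) \<Rightarrow> 'k \<Rightarrow> real \<Rightarrow> real" where
  "switching_fun C s j x = (\<Sum>m\<in>UNIV. s m x * (matrix_inv (support_matrix C s)) $ m $ j)"

definition projection_fun ::
  "('k::finite \<Rightarrow> (real \<Rightarrow> real) \<Rightarrow> real) \<Rightarrow> real^'k \<Rightarrow> 'k \<Rightarrow> (real \<Rightarrow> real) \<Rightarrow> real" where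
  "projection_fun C \<kappa> j g = \<kappa> $ j - C j g"

definition constrained_expr ::
  "('k::finite \<Rightarrow> (real \<Rightarrow> real) \<Rightarrow> real) \<Rightarrow> real^'k \<Rightarrow> ('k \<Rightarrow> real \<Rightarrow> real)
     \<Rightarrow> (real \<Rightarrow> real) \<Rightarrow> real \<Rightarrow> real" where
  "constrained_expr C \<kappa> s g x =
     g x + (\<Sum>j\<in>UNIV. switching_fun C s j x * projection_fun C \<kappa> j g)"

end

theory Submission
  imports Defs
begin

lemma constrained_expr_of_solution:
  assumes "\<forall>i. C i f = \<kappa> $ i"
  shows "constrained_expr C \<kappa> s f = f"
  using assms by (intro ext) (simp add: constrained_expr_def projection_fun_def)

text \<open>The free function \<open>g = f\<close> is a preimage: all its projection functionals
  vanish.\<close>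

theorem theorem2:
  fixes C :: "'k::finite \<Rightarrow> (real \<Rightarrow> real) \<Rightarrow> real"
    and D :: "(real \<Rightarrow> real) set"
    and \<kappa> :: "real^'k"
    and s :: "'k \<Rightarrow> real \<Rightarrow> real"
    and f :: "real \<Rightarrow> real"
  assumes "linear_constraints C D"
    and "\<forall>j. s j \<in> D"
    and "invertible (support_matrix C s)"
    and "f \<in> D"
    and "\<forall>i. C i f = \<kappa> $ i"
  shows "\<exists>g\<in>D. constrained_expr C \<kappa> s g = f"
  using assms(4,5) constrained_expr_of_solution by blast

end
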